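(* Let $P(t)\in\mathbb{Q}[t]$ be an admissible Hilbert polynomial with Macaulay–Hartshorne expression $\sum_{i=0}^d\binom{t+i}{i+1}-\binom{t+i-e_i}{i+1}$, where $e_0\ge e_1\ge\dots\ge e_d>0$, and Gotzmann expression $\sum_{j=1}^r\binom{t+b_j-(j-1)}{b_j}$, where $b_1\ge b_2\ge\dots\ge b_r\ge0$. Then $r=e_0$ and the nonnegative partition $(b_1,\dots,b_r)$ is conjugate to the partition $(e_1,\dots,e_d)$; that is, for each $1\le i\le d$ exactly $e_i-e_{i+1}$ of the $b_j$ equal $i$ (where $e_{d+1}:=0$), the remaining $b_j$ being $0$.
   Context: Binomial coefficients are polynomials in $t$: $\binom{t+a}{b}=\frac{(t+a)(t+a-1)\cdots(t+a-b+1)}{b!}$ if $b\ge0$, and $0$ if $b<0$. An admissible Hilbert polynomial is the Hilbert polynomial of a nonempty closed subscheme of some projective space over an algebraically closed field; every such polynomial has a unique Macaulay–Hartshorne expression and a unique Gotzmann expression of the forms given. *)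

theory Defs
  imports Complex_Main
begin

definition MH_expr :: "nat \<Rightarrow> (nat \<Rightarrow> nat) \<Rightarrow> rat \<Rightarrow> rat" where
  "MH_expr d e t = (\<Sum>i=0..d. ((t + of_nat i) gchoose (i+1))
                               - ((t + of_nat i - of_nat (e i)) gchoose (i+1)))"

definition Gotz_expr :: "nat \<Rightarrow> (nat \<Rightarrow> nat) \<Rightarrow> rat \<Rightarrow> rat" where
  "Gotz_expr r b t = (\<Sum>j=1..r. (t + of_nat (b j) - (of_nat j - 1)) gchoose (b j))"

end

theory Submission imports Defs begin

text \<open>By Pascal's rule the i-th Macaulay--Hartshorne summand telescopes to
  \<open>\<Sum>j=1..e i. (t + i - j) gchoose i\<close>, and by the parallel summation identity the j-th
  Gotzmann summand equals \<open>\<Sum>i\<le>b j. (t + i - j) gchoose i\<close>. Exchanging the order of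
  summation therefore rewrites the Macaulay--Hartshorne expression as the Gotzmann expression
  with \<open>e 0\<close> terms whose parts form the conjugate partition of \<open>(e 1, \<dots>, e d)\<close>.
  It remains to see that the polynomial determines antitone Gotzmann data: its backward
  difference is the Gotzmann expression of the positive parts, each lowered by one, and its
  value at \<open>0\<close> then recovers the number of zero parts; induct on the largest part.\<close>

lemma antimono_on_if_Suc_steps:
  fixes f :: "nat \<Rightarrow> 'a::order"
  assumes "\<forall>j. lo \<le> j \<and> j < hi \<longrightarrow> f (Suc j) \<le> f j"
  shows "antimono_on {lo..hi} f"
proof (rule monotone_onI)
  fix j k assume "j \<in> {lo..hi}" "k \<in> {lo..hi}" "j \<le> k"
  from \<open>j \<le> k\<close> \<open>k \<in> {lo..hi}\<close> show "f k \<le> f j"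
  proof (induction k rule: dec_induct)
    case (step n)
    then have "f (Suc n) \<le> f n" using assms \<open>j \<in> {lo..hi}\<close> by auto
    moreover have "f n \<le> f j" using step \<open>j \<in> {lo..hi}\<close> by auto
    ultimately show ?case by (rule order_trans)
  qed simp
qed

lemma downward_closed_eq_atLeastAtMost_card:
  fixes S :: "nat set"
  assumes "S \<subseteq> {1..n}" and "\<And>i k. k \<in> S \<Longrightarrow> 1 \<le> i \<Longrightarrow> i \<le> k \<Longrightarrow> i \<in> S"
  shows "S = {1..card S}"
proof (cases "S = {}")
  case False
  have "finite S" using assms(1) finite_subset by blast
  define m where "m = Max S"
  have "S = {1..m}"
  proof
    show "S \<subseteq> {1..m}" using assms(1) \<open>finite S\<close> unfolding m_def by auto
    show "{1..m} \<subseteq> S"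
      using assms(2)[of m] Max_in[OF \<open>finite S\<close> False] unfolding m_def by auto
  qed
  then show ?thesis by simp
qed simp

lemma antimono_on_superlevel_set:
  fixes f :: "nat \<Rightarrow> 'a::order"
  assumes "antimono_on {1..n} f"
  shows "{j\<in>{1..n}. c \<le> f j} = {1..card {j\<in>{1..n}. c \<le> f j}}"
proof (rule downward_closed_eq_atLeastAtMost_card)
  show "{j\<in>{1..n}. c \<le> f j} \<subseteq> {1..n}" by auto
  fix i k assume k: "k \<in> {j\<in>{1..n}. c \<le> f j}" and "1 \<le> i" "i \<le> k"
  then have "f k \<le> f i" using monotone_onD[OF assms, of i k] by auto
  with k \<open>1 \<le> i\<close> \<open>i \<le> k\<close> show "i \<in> {j\<in>{1..n}. c \<le> f j}"
    by (auto intro: order_trans)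
qed

lemma antimono_on_positive_prefix:
  fixes b :: "nat \<Rightarrow> nat"
  assumes "antimono_on {1..r} b"
  obtains s where "s \<le> r" "\<forall>j\<in>{1..s}. 0 < b j" "\<forall>j\<in>{s<..r}. b j = 0"
proof -
  define s where "s = card {j\<in>{1..r}. 1 \<le> b j}"
  have prefix: "{j\<in>{1..r}. 1 \<le> b j} = {1..s}"
    unfolding s_def by (rule antimono_on_superlevel_set[OF assms])
  then have "{1..s} \<subseteq> {1..r}" by blast
  then have "s \<le> r" by (cases "s = 0") simp_all
  moreover have "\<forall>j\<in>{1..s}. 0 < b j"
  proof
    fix j assume "j \<in> {1..s}"
    then have "j \<in> {j\<in>{1..r}. 1 \<le> b j}" using prefix by blast
    then show "0 < b j" by simp
  qed
  moreover have "\<forall>j\<in>{s<..r}. b j = 0"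
  proof
    fix j assume j: "j \<in> {s<..r}"
    then have "j \<notin> {j\<in>{1..r}. 1 \<le> b j}" using prefix by auto
    with j show "b j = 0" by simp
  qed
  ultimately show ?thesis using that by blast
qed

lemma gbinomial_Suc_diff_eq_sum:
  fixes x :: "'a::field_char_0"
  shows "(x gchoose Suc i) - ((x - of_nat e) gchoose Suc i) = (\<Sum>j=1..e. (x - of_nat j) gchoose i)"
proof (induction e)
  case (Suc e)
  let ?y = "x - of_nat (Suc e)"
  have "x - of_nat e = ?y + 1" by simp
  then have pascal: "(x - of_nat e) gchoose Suc i = (?y gchoose i) + (?y gchoose Suc i)"
    by (simp only: gbinomial_Suc_Suc)
  have "(x gchoose Suc i) - (?y gchoose Suc i)
      = ((x gchoose Suc i) - ((x - of_nat e) gchoose Suc i)) + (?y gchoose i)"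
    unfolding pascal by simp
  also have "\<dots> = (\<Sum>j=1..Suc e. (x - of_nat j) gchoose i)"
    unfolding Suc.IH by simp
  finally show ?case .
qed simp

lemma MH_expr_eq_double_sum:
  "MH_expr d e t = (\<Sum>i=0..d. \<Sum>j=1..e i. (t + of_nat i - of_nat j) gchoose i)"
  unfolding MH_expr_def Suc_eq_plus1[symmetric]
  by (rule sum.cong[OF refl]) (rule gbinomial_Suc_diff_eq_sum)

lemma Gotz_expr_eq_double_sum:
  "Gotz_expr r b t = (\<Sum>j=1..r. \<Sum>i\<le>b j. (t + of_nat i - of_nat j) gchoose i)"
  unfolding Gotz_expr_def
proof (rule sum.cong[OF refl])
  fix j
  have "t + of_nat (b j) - (of_nat j - 1) = (t - of_nat j) + of_nat (b j) + 1" by simp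
  also have "\<dots> gchoose b j = (\<Sum>i\<le>b j. ((t - of_nat j) + of_nat i) gchoose i)"
    by (rule gbinomial_parallel_sum[symmetric])
  also have "\<dots> = (\<Sum>i\<le>b j. (t + of_nat i - of_nat j) gchoose i)"
    by (rule sum.cong[OF refl]) (simp add: algebra_simps)
  finally show "(t + of_nat (b j) - (of_nat j - 1)) gchoose b j
      = (\<Sum>i\<le>b j. (t + of_nat i - of_nat j) gchoose i)" .
qed

lemma Gotz_expr_backward_diff:
  fixes b :: "nat \<Rightarrow> nat"
  assumes "s \<le> r" and pos: "\<forall>j\<in>{1..s}. 0 < b j" and zero: "\<forall>j\<in>{s<..r}. b j = 0"
  shows "Gotz_expr r b t - Gotz_expr r b (t - 1) = Gotz_expr s (\<lambda>j. b j - 1) t"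
proof -
  let ?g = "\<lambda>j. (t + of_nat (b j - 1) - (of_nat j - 1)) gchoose (b j - 1)"
  have diff_term: "((t + of_nat (b j) - (of_nat j - 1)) gchoose b j)
      - ((t - 1 + of_nat (b j) - (of_nat j - 1)) gchoose b j) = (if j \<le> s then ?g j else 0)"
    if "j \<in> {1..r}" for j
  proof (cases "j \<le> s")
    case True
    then have "0 < b j" using pos that by simp
    then obtain k where k: "b j = Suc k" using gr0_implies_Suc by blast
    define c where "c = t + of_nat k - (of_nat j - 1)"
    have shifts: "t + of_nat (b j) - (of_nat j - 1) = c + 1"
      "t - 1 + of_nat (b j) - (of_nat j - 1) = c" "t + of_nat (b j - 1) - (of_nat j - 1) = c"
      unfolding c_def k by simp_all
    show ?thesis
      unfolding shifts using True gbinomial_Suc_Suc[of c k] by (simp add: k)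
  next
    case False
    then have "b j = 0" using zero that by simp
    with False show ?thesis by simp
  qed
  have "Gotz_expr r b t - Gotz_expr r b (t - 1) = (\<Sum>j=1..r. if j \<le> s then ?g j else 0)"
    unfolding Gotz_expr_def sum_subtractf[symmetric] by (rule sum.cong[OF refl]) (rule diff_term)
  also have "\<dots> = (\<Sum>j\<in>{j\<in>{1..r}. j \<le> s}. ?g j)"
    by (rule sum.inter_filter[symmetric]) simp
  also have "{j\<in>{1..r}. j \<le> s} = {1..s}"
    using \<open>s \<le> r\<close> by auto
  finally show ?thesis unfolding Gotz_expr_def .
qed

lemma Gotz_expr_drop_zeros:
  assumes "s \<le> r" and "\<forall>j\<in>{s<..r}. b j = 0"
  shows "Gotz_expr r b t = Gotz_expr s b t + of_nat (r - s)"
proof -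
  have "{1..r} = {1..s} \<union> {s<..r}" using \<open>s \<le> r\<close> by auto
  then have "Gotz_expr r b t
      = Gotz_expr s b t + (\<Sum>j\<in>{s<..r}. (t + of_nat (b j) - (of_nat j - 1)) gchoose b j)"
    unfolding Gotz_expr_def by (simp only:) (rule sum.union_disjoint, auto)
  also have "(\<Sum>j\<in>{s<..r}. (t + of_nat (b j) - (of_nat j - 1)) gchoose b j) = of_nat (r - s)"
    using assms(2) by simp
  finally show ?thesis .
qed

lemma antimono_on_pred:
  fixes b :: "'a::order \<Rightarrow> nat"
  assumes "antimono_on A b"
  shows "antimono_on A (\<lambda>j. b j - 1)"
  using assms by (intro monotone_onI diff_le_mono) (auto dest: monotone_onD)

lemma Gotz_expr_eq_imp_eq_bounded:
  fixes b b' :: "nat \<Rightarrow> nat"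
  assumes "antimono_on {1..r} b" "antimono_on {1..r'} b'"
    and "\<forall>j\<in>{1..r}. b j \<le> N" "\<forall>j\<in>{1..r'}. b' j \<le> N"
    and "Gotz_expr r b = Gotz_expr r' b'"
  shows "r = r' \<and> (\<forall>j\<in>{1..r}. b j = b' j)"
  using assms
proof (induction N arbitrary: r r' b b')
  case 0
  then have "Gotz_expr r b 0 = of_nat r" "Gotz_expr r' b' 0 = of_nat r'"
    using Gotz_expr_drop_zeros[of 0 r b 0] Gotz_expr_drop_zeros[of 0 r' b' 0]
    by (simp_all add: Gotz_expr_def)
  with "0.prems"(5) have "r = r'" by simp
  with "0.prems"(3,4) show ?case by simp
next
  case (Suc N)
  obtain s where "s \<le> r" and pos: "\<forall>j\<in>{1..s}. 0 < b j" and zero: "\<forall>j\<in>{s<..r}. b j = 0"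
    using antimono_on_positive_prefix[OF Suc.prems(1)] by blast
  obtain s' where "s' \<le> r'" and pos': "\<forall>j\<in>{1..s'}. 0 < b' j"
    and zero': "\<forall>j\<in>{s'<..r'}. b' j = 0"
    using antimono_on_positive_prefix[OF Suc.prems(2)] by blast
  have "Gotz_expr s (\<lambda>j. b j - 1) = Gotz_expr s' (\<lambda>j. b' j - 1)"
  proof
    fix t
    have "Gotz_expr s (\<lambda>j. b j - 1) t = Gotz_expr r b t - Gotz_expr r b (t - 1)"
      using Gotz_expr_backward_diff[OF \<open>s \<le> r\<close> pos zero] by simp
    also have "\<dots> = Gotz_expr r' b' t - Gotz_expr r' b' (t - 1)"
      using Suc.prems(5) by simp
    also have "\<dots> = Gotz_expr s' (\<lambda>j. b' j - 1) t"
      by (rule Gotz_expr_backward_diff[OF \<open>s' \<le> r'\<close> pos' zero'])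
    finally show "Gotz_expr s (\<lambda>j. b j - 1) t = Gotz_expr s' (\<lambda>j. b' j - 1) t" .
  qed
  moreover have "antimono_on {1..s} (\<lambda>j. b j - 1)" "antimono_on {1..s'} (\<lambda>j. b' j - 1)"
    using monotone_on_subset[OF antimono_on_pred[OF Suc.prems(1)], of "{1..s}"]
      monotone_on_subset[OF antimono_on_pred[OF Suc.prems(2)], of "{1..s'}"]
      \<open>s \<le> r\<close> \<open>s' \<le> r'\<close> by auto
  moreover have "\<forall>j\<in>{1..s}. b j - 1 \<le> N" "\<forall>j\<in>{1..s'}. b' j - 1 \<le> N"
  proof -
    have "{1..s} \<subseteq> {1..r}" "{1..s'} \<subseteq> {1..r'}" using \<open>s \<le> r\<close> \<open>s' \<le> r'\<close> by auto
    then have "\<forall>j\<in>{1..s}. b j \<le> Suc N" "\<forall>j\<in>{1..s'}. b' j \<le> Suc N"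
      using Suc.prems(3,4) by blast+
    then show "\<forall>j\<in>{1..s}. b j - 1 \<le> N" "\<forall>j\<in>{1..s'}. b' j - 1 \<le> N" by auto
  qed
  ultimately have "s = s'" and pred_eq: "\<forall>j\<in>{1..s}. b j - 1 = b' j - 1"
    using Suc.IH by blast+
  have prefix_eq: "\<forall>j\<in>{1..s}. b j = b' j"
  proof
    fix j assume "j \<in> {1..s}"
    then have "0 < b j" "0 < b' j" "b j - 1 = b' j - 1"
      using pos pos' pred_eq \<open>s = s'\<close> by auto
    then show "b j = b' j" by simp
  qed
  have "Gotz_expr s b 0 = Gotz_expr s b' 0"
    unfolding Gotz_expr_def using prefix_eq by (intro sum.cong) auto
  moreover have "Gotz_expr r b 0 = Gotz_expr s b 0 + of_nat (r - s)"
    by (rule Gotz_expr_drop_zeros[OF \<open>s \<le> r\<close> zero])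
  moreover have "Gotz_expr r' b' 0 = Gotz_expr s b' 0 + of_nat (r' - s)"
    using Gotz_expr_drop_zeros[OF \<open>s' \<le> r'\<close> zero'] \<open>s = s'\<close> by simp
  ultimately have "r = r'"
    using Suc.prems(5) \<open>s \<le> r\<close> \<open>s' \<le> r'\<close> \<open>s = s'\<close> by simp
  moreover have "b j = b' j" if "j \<in> {1..r}" for j
  proof (cases "j \<le> s")
    case True
    with prefix_eq that show ?thesis by simp
  next
    case False
    with zero zero' that \<open>r = r'\<close> \<open>s = s'\<close> show ?thesis by simp
  qed
  ultimately show ?case by blast
qed

lemma Gotz_expr_eq_imp_eq:
  fixes b b' :: "nat \<Rightarrow> nat"
  assumes "antimono_on {1..r} b" "antimono_on {1..r'} b'"
    and "Gotz_expr r b = Gotz_expr r' b'"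
  shows "r = r' \<and> (\<forall>j\<in>{1..r}. b j = b' j)"
proof (rule Gotz_expr_eq_imp_eq_bounded[OF assms(1,2) _ _ assms(3)])
  show "\<forall>j\<in>{1..r}. b j \<le> b 1 + b' 1"
    using monotone_onD[OF assms(1), of 1] by (auto intro: trans_le_add1)
  show "\<forall>j\<in>{1..r'}. b' j \<le> b 1 + b' 1"
    using monotone_onD[OF assms(2), of 1] by (auto intro: trans_le_add2)
qed

definition conjugate_partition :: "nat \<Rightarrow> (nat \<Rightarrow> nat) \<Rightarrow> nat \<Rightarrow> nat" where
  "conjugate_partition d e j = card {i\<in>{1..d}. j \<le> e i}"

lemma conjugate_partition_le: "conjugate_partition d e j \<le> d"
proof -
  have "conjugate_partition d e j \<le> card {1..d}"
    unfolding conjugate_partition_def by (rule card_mono) auto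
  then show ?thesis by simp
qed

lemma antimono_conjugate_partition: "antimono (conjugate_partition d e)"
  unfolding conjugate_partition_def by (rule monotoneI) (auto intro: card_mono)

lemma le_conjugate_partition_iff:
  assumes "antimono_on {1..d} e" and "1 \<le> i"
  shows "i \<le> conjugate_partition d e j \<longleftrightarrow> i \<le> d \<and> j \<le> e i"
proof -
  define c where "c = conjugate_partition d e j"
  have column: "{k\<in>{1..d}. j \<le> e k} = {1..c}"
    unfolding c_def conjugate_partition_def by (rule antimono_on_superlevel_set[OF assms(1)])
  have "i \<le> c \<longleftrightarrow> i \<in> {1..c}" using assms(2) by simp
  also have "\<dots> \<longleftrightarrow> i \<in> {k\<in>{1..d}. j \<le> e k}" unfolding column ..
  also have "\<dots> \<longleftrightarrow> i \<le> d \<and> j \<le> e i" using assms(2) by simp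
  finally show ?thesis unfolding c_def .
qed

lemma MH_expr_eq_Gotz_expr_conjugate:
  assumes "antimono_on {0..d} e"
  shows "MH_expr d e = Gotz_expr (e 0) (conjugate_partition d e)"
proof
  fix t :: rat
  let ?c = "conjugate_partition d e"
  let ?g = "\<lambda>i j. (t + of_nat i - of_nat j) gchoose i"
  have anti: "antimono_on {1..d} e" using monotone_on_subset[OF assms] by simp
  have rows: "{1..e i} = {j\<in>{1..e 0}. i \<le> ?c j}" if "i \<in> {0..d}" for i
  proof (cases "i = 0")
    case False
    have "e i \<le> e 0" using monotone_onD[OF assms, of 0 i] that by simp
    moreover have "i \<le> ?c j \<longleftrightarrow> j \<le> e i" for j
      using le_conjugate_partition_iff[OF anti, of i j] False that by simp
    ultimately show ?thesis by (intro set_eqI) auto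
  qed auto
  have "MH_expr d e t = (\<Sum>i\<in>{0..d}. \<Sum>j\<in>{1..e i}. ?g i j)"
    by (rule MH_expr_eq_double_sum)
  also have "\<dots> = (\<Sum>i\<in>{0..d}. \<Sum>j\<in>{j\<in>{1..e 0}. i \<le> ?c j}. ?g i j)"
    using rows by (intro sum.cong) simp_all
  also have "\<dots> = (\<Sum>j\<in>{1..e 0}. \<Sum>i\<in>{i\<in>{0..d}. i \<le> ?c j}. ?g i j)"
    by (rule sum.swap_restrict) simp_all
  also have "\<dots> = (\<Sum>j\<in>{1..e 0}. \<Sum>i\<le>?c j. ?g i j)"
  proof (rule sum.cong[OF refl])
    fix j
    have "{i\<in>{0..d}. i \<le> ?c j} = {..?c j}" using conjugate_partition_le[of d e j] by auto
    then show "(\<Sum>i\<in>{i\<in>{0..d}. i \<le> ?c j}. ?g i j) = (\<Sum>i\<le>?c j. ?g i j)" by simp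
  qed
  also have "\<dots> = Gotz_expr (e 0) ?c t"
    by (rule Gotz_expr_eq_double_sum[symmetric])
  finally show "MH_expr d e t = Gotz_expr (e 0) ?c t" .
qed

lemma card_conjugate_partition_eq:
  assumes "antimono_on {0..d} e" and "i \<in> {1..d}"
  shows "card {j\<in>{1..e 0}. conjugate_partition d e j = i} = e i - (if i = d then 0 else e (Suc i))"
proof -
  let ?c = "conjugate_partition d e"
  let ?next = "if i = d then 0 else e (Suc i)"
  have anti: "antimono_on {1..d} e" using monotone_on_subset[OF assms(1)] by simp
  have "e i \<le> e 0" using monotone_onD[OF assms(1), of 0 i] assms(2) by simp
  have "{j\<in>{1..e 0}. ?c j = i} = {?next<..e i}"
  proof (rule set_eqI)
    fix j
    have "?c j = i \<longleftrightarrow> i \<le> ?c j \<and> \<not> Suc i \<le> ?c j" by auto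
    also have "\<dots> \<longleftrightarrow> j \<le> e i \<and> \<not> (Suc i \<le> d \<and> j \<le> e (Suc i))"
      using le_conjugate_partition_iff[OF anti] assms(2) by simp
    finally show "j \<in> {j\<in>{1..e 0}. ?c j = i} \<longleftrightarrow> j \<in> {?next<..e i}"
      using \<open>e i \<le> e 0\<close> assms(2) by auto
  qed
  then show ?thesis by simp
qed

theorem lemma2p4:
  fixes d r :: nat and e b :: "nat \<Rightarrow> nat"
  assumes e_mono: "\<forall>i<d. e (Suc i) \<le> e i"
    and e_pos: "e d > 0"
    and b_mono: "\<forall>j. 1 \<le> j \<and> j < r \<longrightarrow> b (Suc j) \<le> b j"
    and same_poly: "\<forall>t::rat. MH_expr d e t = Gotz_expr r b t"
  shows "r = e 0
    \<and> (\<forall>i\<in>{1..d}. card {j\<in>{1..r}. b j = i} = e i - (if i = d then 0 else e (Suc i)))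
    \<and> (\<forall>j\<in>{1..r}. b j \<le> d)"
proof -
  let ?c = "conjugate_partition d e"
  have e_anti: "antimono_on {0..d} e" using e_mono by (intro antimono_on_if_Suc_steps) simp
  have "antimono_on {1..e 0} ?c"
    using antimono_conjugate_partition by (rule monotone_on_subset) simp
  moreover have "antimono_on {1..r} b" by (rule antimono_on_if_Suc_steps[OF b_mono])
  moreover have "Gotz_expr (e 0) ?c = Gotz_expr r b"
    using MH_expr_eq_Gotz_expr_conjugate[OF e_anti] same_poly by auto
  ultimately have "e 0 = r" and b_eq: "\<forall>j\<in>{1..r}. b j = ?c j"
    using Gotz_expr_eq_imp_eq by metis+
  then have "{j\<in>{1..r}. b j = i} = {j\<in>{1..e 0}. ?c j = i}" for i by auto
  then show ?thesis
    using card_conjugate_partition_eq[OF e_anti] b_eq conjugate_partition_le \<open>e 0 = r\<close> by simp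
qed

end
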